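(* Let $p,k,q,n$ be positive integers. If there exist an S-template with width $q$ and $n+1$ colors and an S-template with width $p$ and $k$ colors, then there exists an S-template with width $pq$ and $n+k$ colors.
   Context: A set $A \subseteq \mathbb{N}$ is sum-free if for all $(a,b)\in A^2$ (allowing $a=b$), $a+b \notin A$. For positive integers $p,n$, an S-template with $n$ colors and width $p$ is a partition of $\{1,\dots,p\}$ into $n$ sum-free subsets $A_1,\dots,A_n$ such that for every $i \in \{1,\dots,n-1\}$ (i.e. every subset except $A_n$) and all $(x,y)\in A_i^2$: if $x+y>p$ then $x+y-p \notin A_i$. *)

theory Defs
  imports Main
begin

definition sum_free :: "nat set \<Rightarrow> bool" where
  "sum_free A \<longleftrightarrow> (\<forall>a\<in>A. \<forall>b\<in>A. a + b \<notin> A)"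

definition S_template :: "nat \<Rightarrow> nat \<Rightarrow> (nat \<Rightarrow> nat set) \<Rightarrow> bool" where
  "S_template n p A \<longleftrightarrow>
     (\<Union>i\<in>{1..n}. A i) = {1..p} \<and>
     (\<forall>i\<in>{1..n}. \<forall>j\<in>{1..n}. i \<noteq> j \<longrightarrow> A i \<inter> A j = {}) \<and>
     (\<forall>i\<in>{1..n}. sum_free (A i)) \<and>
     (\<forall>i\<in>{1..n-1}. \<forall>x\<in>A i. \<forall>y\<in>A i. x + y > p \<longrightarrow> x + y - p \<notin> A i)"

end

(* Identify {1..p*q} with {1..q} \<times> {1..p} via (a, b) \<mapsto> p * (a - 1) + b.  Adding two such numbers
   adds the b-coordinates, possibly wrapping around modulo p with a carry into the a-coordinate.
   Hence a product class X \<times> Y is sum-free whenever Y is sum-free and either X is sum-free or Y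
   is wrap-free (modulo p), and it is wrap-free modulo p * q whenever Y is sum-free and either X
   is wrap-free modulo q or Y is wrap-free modulo p.
   The colours of the new template are the columns {1..q} \<times> B j for j < k, together with the
   pieces A i \<times> B k of the last column B k; only A (n + 1) \<times> B k fails to be wrap-free, and it
   is put last. *)

theory Submission
  imports Defs
begin

definition wrap_free :: "nat \<Rightarrow> nat set \<Rightarrow> bool" where
  "wrap_free p A \<longleftrightarrow> (\<forall>x\<in>A. \<forall>y\<in>A. p < x + y \<longrightarrow> x + y - p \<notin> A)"

definition indexed_partition :: "nat \<Rightarrow> (nat \<Rightarrow> 'a set) \<Rightarrow> 'a set \<Rightarrow> bool" where
  "indexed_partition n P S \<longleftrightarrow>
     (\<Union>i\<in>{1..n}. P i) = S \<and> (\<forall>i\<in>{1..n}. \<forall>j\<in>{1..n}. i \<noteq> j \<longrightarrow> P i \<inter> P j = {})"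

lemma S_template_iff:
  "S_template n p A \<longleftrightarrow>
     indexed_partition n A {1..p} \<and> (\<forall>i\<in>{1..n}. sum_free (A i)) \<and>
     (\<forall>i\<in>{1..n-1}. wrap_free p (A i))"
  unfolding S_template_def indexed_partition_def wrap_free_def by auto

lemma indexed_partition_subset:
  "indexed_partition n P S \<Longrightarrow> i \<in> {1..n} \<Longrightarrow> P i \<subseteq> S"
  unfolding indexed_partition_def by blast

lemma indexed_partition_disjoint:
  "indexed_partition n P S \<Longrightarrow> i \<in> {1..n} \<Longrightarrow> j \<in> {1..n} \<Longrightarrow> i \<noteq> j \<Longrightarrow> P i \<inter> P j = {}"
  unfolding indexed_partition_def by blast

lemma indexed_partition_coverE:
  assumes "indexed_partition n P S" and "x \<in> S"
  obtains i where "i \<in> {1..n}" and "x \<in> P i"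
  using assms unfolding indexed_partition_def by blast

lemma indexed_partition_image:
  assumes "inj_on f S" and "indexed_partition n P S"
  shows "indexed_partition n (\<lambda>i. f ` P i) (f ` S)"
  using assms indexed_partition_subset[OF assms(2)] unfolding indexed_partition_def
  by (auto simp flip: inj_on_image_Int[OF assms(1)] simp: image_UN)

lemma indexed_partition_times:
  assumes "indexed_partition n P S"
  shows "indexed_partition n (\<lambda>i. P i \<times> Y) (S \<times> Y)"
    and "indexed_partition n (\<lambda>i. Y \<times> P i) (Y \<times> S)"
  using assms unfolding indexed_partition_def by auto

(* The last class Q k of a partition is replaced by the classes of a partition R of it, in the
   order R 1, ..., R m, Q 1, ..., Q (k - 1), R (m + 1). *)
definition refine_last :: "nat \<Rightarrow> nat \<Rightarrow> (nat \<Rightarrow> 'a set) \<Rightarrow> (nat \<Rightarrow> 'a set) \<Rightarrow> nat \<Rightarrow> 'a set" where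
  "refine_last m k Q R i = (if m < i \<and> i < m + k then Q (i - m) else R (min i (m + 1)))"

lemma refine_last_subset:
  assumes "indexed_partition (m + 1) R (Q k)" and "i \<in> {1..m+k}"
  shows "refine_last m k Q R i \<subseteq> (if m < i \<and> i < m + k then Q (i - m) else Q k)"
  using assms indexed_partition_subset[OF assms(1), of "min i (m + 1)"]
  by (auto simp: refine_last_def)

lemma UN_refine_last:
  assumes Q: "indexed_partition k Q U" and R: "indexed_partition (m + 1) R (Q k)" and "0 < k"
  shows "(\<Union>i\<in>{1..m+k}. refine_last m k Q R i) = U"
proof (intro subset_antisym subsetI)
  fix x assume "x \<in> (\<Union>i\<in>{1..m+k}. refine_last m k Q R i)"
  then obtain i where i: "i \<in> {1..m+k}" "x \<in> refine_last m k Q R i"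
    by blast
  have "i - m \<in> {1..k}" if "m < i \<and> i < m + k"
    using that by auto
  then show "x \<in> U"
    using i refine_last_subset[where Q = Q and k = k, OF R i(1)] \<open>0 < k\<close>
      indexed_partition_subset[OF Q, of "i - m"] indexed_partition_subset[OF Q, of k]
    by (auto split: if_splits)
next
  fix x assume "x \<in> U"
  obtain j where j: "j \<in> {1..k}" "x \<in> Q j"
    using Q \<open>x \<in> U\<close> by (rule indexed_partition_coverE)
  show "x \<in> (\<Union>i\<in>{1..m+k}. refine_last m k Q R i)"
  proof (cases "j < k")
    case True
    then have "x \<in> refine_last m k Q R (m + j)"
      using j by (auto simp: refine_last_def)
    then show ?thesis
      using j True by (intro UN_I[of "m + j"]) auto
  next
    case False
    then have "x \<in> Q k"
      using j by auto
    obtain l where l: "l \<in> {1..m+1}" "x \<in> R l"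
      using R \<open>x \<in> Q k\<close> by (rule indexed_partition_coverE)
    then have "x \<in> refine_last m k Q R (if l \<le> m then l else m + k)"
      using \<open>0 < k\<close> by (auto simp: refine_last_def le_Suc_eq)
    then show ?thesis
      using l \<open>0 < k\<close> by (intro UN_I[of "if l \<le> m then l else m + k"]) auto
  qed
qed

lemma refine_last_disjoint:
  assumes Q: "indexed_partition k Q U" and R: "indexed_partition (m + 1) R (Q k)" and "0 < k"
    and i: "i \<in> {1..m+k}" and j: "j \<in> {1..m+k}" and "i \<noteq> j"
  shows "refine_last m k Q R i \<inter> refine_last m k Q R j = {}"
proof -
  have k: "k \<in> {1..k}"
    using \<open>0 < k\<close> by simp
  show ?thesis
  proof (cases "m < i \<and> i < m + k" ; cases "m < j \<and> j < m + k")
    assume "m < i \<and> i < m + k" "m < j \<and> j < m + k"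
    moreover have "Q (i - m) \<inter> Q (j - m) = {}"
      using calculation \<open>i \<noteq> j\<close> by (intro indexed_partition_disjoint[OF Q]) auto
    ultimately show ?thesis
      by (simp add: refine_last_def)
  next
    assume "m < i \<and> i < m + k" "\<not> (m < j \<and> j < m + k)"
    moreover have "Q (i - m) \<inter> Q k = {}"
      using calculation by (intro indexed_partition_disjoint[OF Q] k) auto
    ultimately show ?thesis
      using refine_last_subset[where Q = Q and k = k, OF R j] unfolding refine_last_def by auto blast+
  next
    assume "\<not> (m < i \<and> i < m + k)" "m < j \<and> j < m + k"
    moreover have "Q (j - m) \<inter> Q k = {}"
      using calculation by (intro indexed_partition_disjoint[OF Q] k) auto
    ultimately show ?thesis
      using refine_last_subset[where Q = Q and k = k, OF R i] unfolding refine_last_def by auto blast+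
  next
    assume "\<not> (m < i \<and> i < m + k)" "\<not> (m < j \<and> j < m + k)"
    moreover have "R (min i (m + 1)) \<inter> R (min j (m + 1)) = {}"
      using calculation i j \<open>i \<noteq> j\<close> by (intro indexed_partition_disjoint[OF R]) auto
    ultimately show ?thesis
      unfolding refine_last_def by presburger
  qed
qed

lemma indexed_partition_refine_last:
  assumes "indexed_partition k Q U" and "indexed_partition (m + 1) R (Q k)" and "0 < k"
  shows "indexed_partition (m + k) (refine_last m k Q R) U"
  using UN_refine_last[OF assms] refine_last_disjoint[OF assms]
  unfolding indexed_partition_def by blast

definition block_index :: "nat \<Rightarrow> nat \<times> nat \<Rightarrow> nat" where
  "block_index p = (\<lambda>(a, b). p * (a - 1) + b)"

lemma block_index_eq_iff:
  fixes p m m' b b' :: nat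
  assumes "b \<in> {1..p}" "b' \<in> {1..p}"
  shows "p * m + b = p * m' + b' \<longleftrightarrow> m = m' \<and> b = b'"
proof
  assume eq: "p * m + b = p * m' + b'"
  have p: "p \<noteq> 0" and "(b - 1) div p = 0" "(b' - 1) div p = 0"
    using assms by auto
  then have "(p * m + (b - 1)) div p = m" "(p * m' + (b' - 1)) div p = m'"
    using div_mult_self4[OF p, of m "b - 1"] div_mult_self4[OF p, of m' "b' - 1"] by linarith+
  moreover have "p * m + (b - 1) = p * m' + (b' - 1)"
    using eq assms by auto
  ultimately show "m = m' \<and> b = b'"
    using eq by auto
qed simp

lemma bij_betw_block_index:
  fixes p q :: nat
  assumes "0 < p"
  shows "bij_betw (block_index p) ({1..q} \<times> {1..p}) {1..p * q}"
  unfolding bij_betw_def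
proof
  show "inj_on (block_index p) ({1..q} \<times> {1..p})"
    by (intro inj_onI) (auto simp: block_index_def block_index_eq_iff)
  show "block_index p ` ({1..q} \<times> {1..p}) = {1..p * q}"
  proof (intro subset_antisym subsetI)
    fix x assume "x \<in> block_index p ` ({1..q} \<times> {1..p})"
    then obtain a b where x: "x = p * (a - 1) + b" and a: "a \<in> {1..q}" and b: "b \<in> {1..p}"
      by (auto simp: block_index_def)
    have "p * (a - 1) + p = p * a"
      using a by (cases a) auto
    also have "\<dots> \<le> p * q"
      using a by simp
    finally show "x \<in> {1..p * q}"
      using x b by auto
  next
    fix x assume x: "x \<in> {1..p * q}"
    then have "x - 1 < q * p"
      by (auto simp: mult.commute)
    then have "(x - 1) div p < q"
      by (rule less_mult_imp_div_less)
    moreover have "x = block_index p ((x - 1) div p + 1, (x - 1) mod p + 1)"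
      using x by (simp add: block_index_def)
    ultimately show "x \<in> block_index p ` ({1..q} \<times> {1..p})"
      using assms by (intro image_eqI) (auto simp: Suc_leI)
  qed
qed

lemma block_index_add_eq:
  fixes p c a1 a2 a3 b1 b2 b3 :: nat
  assumes "1 \<le> a1" "1 \<le> a2" "1 \<le> a3" "b1 \<in> {1..p}" "b2 \<in> {1..p}" "b3 \<in> {1..p}"
    and eq: "block_index p (a1, b1) + block_index p (a2, b2) = block_index p (a3, b3) + p * c"
  shows "b3 = b1 + b2 \<or> (p < b1 + b2 \<and> b3 = b1 + b2 - p \<and> a1 + a2 = a3 + c)"
proof (cases "b1 + b2 \<le> p")
  case True
  have "p * (a1 - 1 + (a2 - 1)) + (b1 + b2) = p * (a3 - 1 + c) + b3"
    using eq by (simp add: block_index_def algebra_simps)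
  then show ?thesis
    using True assms(4-6) block_index_eq_iff by auto
next
  case False
  have "p * (a1 - 1 + (a2 - 1) + 1) + (b1 + b2 - p) = p * (a3 - 1 + c) + b3"
    using eq False by (simp add: block_index_def algebra_simps)
  then have "a1 - 1 + (a2 - 1) + 1 = a3 - 1 + c \<and> b1 + b2 - p = b3"
    using False assms(4-6) by (subst (asm) block_index_eq_iff) auto
  then show ?thesis
    using False assms(1-3) by linarith
qed

lemma sum_free_block_product:
  assumes X: "X \<subseteq> {1..}" and Y: "Y \<subseteq> {1..p}" and "sum_free Y"
    and "sum_free X \<or> wrap_free p Y"
  shows "sum_free (block_index p ` (X \<times> Y))"
  unfolding sum_free_def
proof (intro ballI notI)
  fix u v assume "u \<in> block_index p ` (X \<times> Y)" "v \<in> block_index p ` (X \<times> Y)"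
    and "u + v \<in> block_index p ` (X \<times> Y)"
  then obtain a1 b1 a2 b2 a3 b3 where
    in_X: "a1 \<in> X" "a2 \<in> X" "a3 \<in> X" and in_Y: "b1 \<in> Y" "b2 \<in> Y" "b3 \<in> Y" and
    eq: "block_index p (a1, b1) + block_index p (a2, b2) = block_index p (a3, b3) + p * 0"
    by auto
  have "1 \<le> a1" "1 \<le> a2" "1 \<le> a3" "b1 \<in> {1..p}" "b2 \<in> {1..p}" "b3 \<in> {1..p}"
    using X Y in_X in_Y by auto
  from block_index_add_eq[OF this eq]
  have "b3 = b1 + b2 \<or> (p < b1 + b2 \<and> b3 = b1 + b2 - p \<and> a1 + a2 = a3)"
    by simp
  then show False
    using assms in_X in_Y unfolding sum_free_def wrap_free_def by metis
qed

lemma wrap_free_block_product: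
  assumes X: "X \<subseteq> {1..}" and Y: "Y \<subseteq> {1..p}" and "sum_free Y"
    and "wrap_free q X \<or> wrap_free p Y"
  shows "wrap_free (p * q) (block_index p ` (X \<times> Y))"
  unfolding wrap_free_def
proof (intro ballI impI notI)
  fix u v assume "u \<in> block_index p ` (X \<times> Y)" "v \<in> block_index p ` (X \<times> Y)"
    and "p * q < u + v" and "u + v - p * q \<in> block_index p ` (X \<times> Y)"
  then obtain a1 b1 a2 b2 a3 b3 where
    in_X: "a1 \<in> X" "a2 \<in> X" "a3 \<in> X" and in_Y: "b1 \<in> Y" "b2 \<in> Y" "b3 \<in> Y" and
    eq: "block_index p (a1, b1) + block_index p (a2, b2) = block_index p (a3, b3) + p * q"
    by auto
  have bounds: "1 \<le> a1" "1 \<le> a2" "1 \<le> a3" "b1 \<in> {1..p}" "b2 \<in> {1..p}" "b3 \<in> {1..p}"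
    using X Y in_X in_Y by auto
  from block_index_add_eq[OF this eq]
  have "b3 = b1 + b2 \<or> (p < b1 + b2 \<and> b3 = b1 + b2 - p \<and> q < a1 + a2 \<and> a3 = a1 + a2 - q)"
    using bounds(3) by auto
  then show False
    using assms in_X in_Y unfolding sum_free_def wrap_free_def by metis
qed

lemma S_template_product:
  fixes A B :: "nat \<Rightarrow> nat set"
  assumes "0 < p" "0 < k" and A: "S_template (n + 1) q A" and B: "S_template k p B"
  defines "F \<equiv> refine_last n k (\<lambda>j. {1..q} \<times> B j) (\<lambda>i. A i \<times> B k)"
  shows "S_template (n + k) (p * q) (\<lambda>i. block_index p ` F i)"
proof -
  have A_part: "indexed_partition (n + 1) A {1..q}" and B_part: "indexed_partition k B {1..p}"
    using A B by (simp_all add: S_template_iff)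
  have "indexed_partition (n + k) F ({1..q} \<times> {1..p})"
    unfolding F_def using A_part B_part \<open>0 < k\<close>
    by (intro indexed_partition_refine_last indexed_partition_times)
  then have partition: "indexed_partition (n + k) (\<lambda>i. block_index p ` F i) {1..p * q}"
    using bij_betw_block_index[OF \<open>0 < p\<close>, of q] indexed_partition_image
    unfolding bij_betw_def by metis
  have "sum_free (block_index p ` F i) \<and> (i < n + k \<longrightarrow> wrap_free (p * q) (block_index p ` F i))"
    if i: "i \<in> {1..n+k}" for i
  proof (cases "n < i \<and> i < n + k")
    case True
    then have "F i = {1..q} \<times> B (i - n)" and j: "i - n \<in> {1..k}" "i - n \<in> {1..k-1}"
      by (auto simp: F_def refine_last_def)
    then show ?thesis
      using B indexed_partition_subset[OF B_part j(1)]
      by (auto simp: S_template_iff intro!: sum_free_block_product wrap_free_block_product)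
  next
    case False
    then have "F i = A (min i (n + 1)) \<times> B k" and "min i (n + 1) \<in> {1..n+1}"
      and "i < n + k \<Longrightarrow> min i (n + 1) \<in> {1..n}"
      using i by (auto simp: F_def refine_last_def)
    then show ?thesis
      using A B indexed_partition_subset[OF A_part, of "min i (n + 1)"]
        indexed_partition_subset[OF B_part, of k] \<open>0 < k\<close>
      by (auto simp: S_template_iff intro!: sum_free_block_product wrap_free_block_product)
  qed
  with partition show ?thesis
    by (auto simp: S_template_iff)
qed

theorem theorem2p6:
  fixes p k q n :: nat
  assumes "0 < p" "0 < k" "0 < q" "0 < n"
    and "\<exists>A. S_template (n + 1) q A"
    and "\<exists>B. S_template k p B"
  shows "\<exists>C. S_template (n + k) (p * q) C"
proof -
  obtain A B where "S_template (n + 1) q A" and "S_template k p B"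
    using assms by blast
  then show ?thesis
    using S_template_product[OF \<open>0 < p\<close> \<open>0 < k\<close>] by blast
qed

end
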